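(* For a prime $N\ge3$, \[ \frac1{N-1}\sum_{w=1}^{N-1}\frac1N\sum_{h=1}^{N-1}\frac{|\cot(\pi hw/N)|}{h}\le\frac{H_{N-1}(1)}{N}\,\frac6\pi\log(N). \]
   Context: $H_n(1)=\sum_{h=1}^n h^{-1}$ is the $n$-th harmonic number; $\log$ is the natural logarithm. *)

theory Defs
  imports "HOL-Analysis.Analysis" "HOL-Computational_Algebra.Primes"
begin

end

theory Submission
  imports Defs "HOL-Number_Theory.Cong"
begin

text \<open>Multiplication by \<open>h\<close> permutes the nonzero residues mod the prime \<open>N\<close>, so after swapping
  the two sums every inner sum equals \<open>C = \<Sum>k=1..N-1. \<bar>cot (\<pi>k/N)\<bar>\<close> and the left-hand side is
  \<open>C \<cdot> H\<^sub>N\<^sub>-\<^sub>1 / (N(N-1))\<close>. The bound \<open>\<bar>cot x\<bar> \<le> 1/x + 1/(\<pi> - x)\<close> on \<open>(0, \<pi>)\<close> gives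
  \<open>C \<le> 2N H\<^sub>N\<^sub>-\<^sub>1 / \<pi>\<close>, and \<open>H\<^sub>N\<^sub>-\<^sub>1 \<le> ln N + 1 \<le> 2 ln N\<close> together with \<open>4N \<le> 6(N - 1)\<close>
  for \<open>N \<ge> 3\<close> finishes the estimate.\<close>

lemma x_cos_le_sin:
  fixes x :: real
  assumes "0 \<le> x" "x \<le> pi"
  shows "x * cos x \<le> sin x"
proof -
  let ?f = "\<lambda>x. sin x - x * cos x"
  have "\<exists>y. (?f has_real_derivative y) (at u) \<and> y \<ge> 0" if "0 \<le> u" "u \<le> x" for u
  proof -
    have "(?f has_real_derivative u * sin u) (at u)"
      by (auto intro!: derivative_eq_intros simp: field_simps)
    moreover have "u * sin u \<ge> 0" using that assms by (simp add: sin_ge_zero)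
    ultimately show ?thesis by blast
  qed
  then have "?f 0 \<le> ?f x" by (rule DERIV_nonneg_imp_nondecreasing[OF assms(1)])
  then show ?thesis by simp
qed

lemma cot_le_inverse:
  fixes x :: real
  assumes "0 < x" "x < pi"
  shows "cot x \<le> 1 / x"
proof -
  have "sin x > 0" using assms by (simp add: sin_gt_zero)
  moreover have "x * cos x \<le> sin x" using x_cos_le_sin assms by simp
  ultimately show ?thesis using assms by (simp add: cot_def field_simps)
qed

lemma abs_cot_le:
  fixes x :: real
  assumes "0 < x" "x < pi"
  shows "\<bar>cot x\<bar> \<le> 1 / x + 1 / (pi - x)"
proof -
  have "cot x \<le> 1 / x" using cot_le_inverse assms by simp
  moreover have "- cot x \<le> 1 / (pi - x)"
    using cot_le_inverse[of "pi - x"] assms by (simp add: cot_def)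
  moreover have "1 / x > 0" "1 / (pi - x) > 0" using assms by auto
  ultimately show ?thesis by linarith
qed

lemma cot_add_of_nat_mult_pi: "cot (x + real q * pi) = cot x"
proof -
  have "cot (x + real q * pi) = (cos x * (-1) ^ q) / (sin x * (-1) ^ q)"
    by (simp add: cot_def sin_add cos_add)
  then show ?thesis by (simp add: cot_def)
qed

lemma cot_pi_mult_mod:
  fixes N m :: nat
  assumes "N > 0"
  shows "cot (pi * real m / real N) = cot (pi * real (m mod N) / real N)"
proof -
  have "real m = real (m mod N) + real N * real (m div N)"
    by (metis mod_mult_div_eq of_nat_add of_nat_mult)
  then have "pi * real m / real N = pi * real (m mod N) / real N + real (m div N) * pi"
    using assms by (simp add: field_simps)
  then show ?thesis by (simp add: cot_add_of_nat_mult_pi)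
qed

lemma sum_nonzero_residues_mult_mod:
  fixes N h :: nat and g :: "nat \<Rightarrow> 'a :: comm_monoid_add"
  assumes "coprime h N"
  shows "(\<Sum>w=1..N-1. g (h * w mod N)) = (\<Sum>k=1..N-1. g k)"
proof -
  let ?f = "\<lambda>w. h * w mod N"
  have inj: "inj_on ?f {1..N-1}"
  proof (rule inj_onI)
    fix a b assume "a \<in> {1..N-1}" "b \<in> {1..N-1}" "?f a = ?f b"
    then show "a = b"
      using cong_mult_lcancel_nat[OF assms] by (auto simp: cong_def)
  qed
  have "?f ` {1..N-1} \<subseteq> {1..N-1}"
  proof
    fix y assume "y \<in> ?f ` {1..N-1}"
    then obtain w where w: "w \<in> {1..N-1}" "y = h * w mod N" by blast
    have "\<not> N dvd h * w"
      using w assms by (auto simp: coprime_commute coprime_dvd_mult_right_iff dest: dvd_imp_le)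
    moreover have "y < N" using w by (cases "N = 0") auto
    ultimately show "y \<in> {1..N-1}" using w by (auto simp: dvd_eq_mod_eq_0)
  qed
  with inj have "?f ` {1..N-1} = {1..N-1}"
    by (simp add: card_image card_subset_eq)
  then show ?thesis using sum.reindex[OF inj, of g] by simp
qed

lemma sum_abs_cot_mult_eq:
  fixes N h :: nat
  assumes "coprime h N" "N > 0"
  shows "(\<Sum>w=1..N-1. \<bar>cot (pi * real h * real w / real N)\<bar>)
       = (\<Sum>k=1..N-1. \<bar>cot (pi * real k / real N)\<bar>)"
proof -
  have "(\<Sum>w=1..N-1. \<bar>cot (pi * real h * real w / real N)\<bar>)
      = (\<Sum>w=1..N-1. \<bar>cot (pi * real (h * w mod N) / real N)\<bar>)"
    by (rule sum.cong[OF refl]) (metis cot_pi_mult_mod[OF assms(2)] of_nat_mult mult.assoc)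
  also have "\<dots> = (\<Sum>k=1..N-1. \<bar>cot (pi * real k / real N)\<bar>)"
    by (rule sum_nonzero_residues_mult_mod[OF assms(1)])
  finally show ?thesis .
qed

lemma double_sum_abs_cot_eq:
  fixes N :: nat
  assumes "prime N"
  shows "(\<Sum>w=1..N-1. \<Sum>h=1..N-1. \<bar>cot (pi * real h * real w / real N)\<bar> / real h)
       = (\<Sum>k=1..N-1. \<bar>cot (pi * real k / real N)\<bar>) * harm (N - 1)"
proof -
  have "(\<Sum>w=1..N-1. \<Sum>h=1..N-1. \<bar>cot (pi * real h * real w / real N)\<bar> / real h)
      = (\<Sum>h=1..N-1. (\<Sum>w=1..N-1. \<bar>cot (pi * real h * real w / real N)\<bar>) / real h)"
    by (subst sum.swap) (simp add: sum_divide_distrib)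
  also have "\<dots> = (\<Sum>h=1..N-1. (\<Sum>k=1..N-1. \<bar>cot (pi * real k / real N)\<bar>) / real h)"
  proof (rule sum.cong[OF refl])
    fix h assume "h \<in> {1..N-1}"
    then have "\<not> N dvd h" by (auto dest: dvd_imp_le)
    then have "coprime h N"
      using assms by (simp add: coprime_commute prime_imp_coprime)
    then show "(\<Sum>w=1..N-1. \<bar>cot (pi * real h * real w / real N)\<bar>) / real h
             = (\<Sum>k=1..N-1. \<bar>cot (pi * real k / real N)\<bar>) / real h"
      using sum_abs_cot_mult_eq[OF _ prime_gt_0_nat[OF assms]] by simp
  qed
  also have "\<dots> = (\<Sum>k=1..N-1. \<bar>cot (pi * real k / real N)\<bar>) * harm (N - 1)"
    by (simp add: harm_def sum_distrib_left divide_inverse)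
  finally show ?thesis .
qed

lemma sum_abs_cot_le_harm:
  fixes N :: nat
  assumes "N > 0"
  shows "(\<Sum>k=1..N-1. \<bar>cot (pi * real k / real N)\<bar>) \<le> 2 * real N / pi * harm (N - 1)"
proof -
  have "(\<Sum>k=1..N-1. \<bar>cot (pi * real k / real N)\<bar>)
      \<le> (\<Sum>k=1..N-1. real N / pi * (1 / real k) + real N / pi * (1 / real (N - k)))"
  proof (rule sum_mono)
    fix k assume k: "k \<in> {1..N-1}"
    then have "0 < pi * real k / real N" "pi * real k / real N < pi"
      using assms by (auto simp: field_simps)
    moreover have "real (N - k) = real N - real k" using k by (subst of_nat_diff) auto
    then have "pi - pi * real k / real N = pi * real (N - k) / real N"
      using assms by (simp add: field_simps)
    ultimately show "\<bar>cot (pi * real k / real N)\<bar>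
        \<le> real N / pi * (1 / real k) + real N / pi * (1 / real (N - k))"
      using abs_cot_le[of "pi * real k / real N"] by simp
  qed
  also have "\<dots> = 2 * real N / pi * harm (N - 1)"
  proof -
    have reflect: "(\<Sum>k=1..N-1. 1 / real (N - k)) = (\<Sum>k=1..N-1. 1 / real k)"
      using sum.atLeastAtMost_rev[of "\<lambda>k. 1 / real k" 1 "N - 1"] assms by simp
    have harm: "(\<Sum>k=1..N-1. 1 / real k) = harm (N - 1)"
      by (simp add: harm_def divide_inverse)
    have "(\<Sum>k=1..N-1. real N / pi * (1 / real k) + real N / pi * (1 / real (N - k)))
        = real N / pi * ((\<Sum>k=1..N-1. 1 / real k) + (\<Sum>k=1..N-1. 1 / real (N - k)))"
      by (simp only: sum.distrib sum_distrib_left distrib_left)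
    then show ?thesis unfolding reflect harm by simp
  qed
  finally show ?thesis .
qed

lemma harm_le_ln_add_one:
  assumes "n \<ge> 1"
  shows "harm n \<le> ln (real n) + (1::real)"
proof -
  obtain m where "n = Suc m" using assms by (cases n) auto
  moreover have "harm (Suc m) - ln (real (Suc m)) \<le> harm (Suc 0) - ln (real (Suc 0))"
    using decseq_harm_diff_ln unfolding decseq_def by (metis le0)
  ultimately show ?thesis by (simp add: harm_Suc harm_expand(1))
qed

lemma harm_pred_le_two_ln:
  fixes N :: nat
  assumes "N \<ge> 3"
  shows "harm (N - 1) \<le> 2 * ln (real N)"
proof -
  have "1 \<le> ln (real N)"
    using exp_le assms by (subst ln_ge_iff) auto
  moreover have "harm (N - 1) \<le> ln (real (N - 1)) + (1::real)"
    using assms by (intro harm_le_ln_add_one) simp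
  moreover have "ln (real (N - 1)) \<le> ln (real N)"
    using assms by simp
  ultimately show ?thesis by linarith
qed

lemma sum_abs_cot_le_ln:
  fixes N :: nat
  assumes "N \<ge> 3"
  shows "(\<Sum>k=1..N-1. \<bar>cot (pi * real k / real N)\<bar>) \<le> (real N - 1) * (6 / pi) * ln (real N)"
proof -
  have "(\<Sum>k=1..N-1. \<bar>cot (pi * real k / real N)\<bar>) \<le> 2 * real N / pi * harm (N - 1)"
    using assms by (intro sum_abs_cot_le_harm) simp
  also have "\<dots> \<le> 2 * real N / pi * (2 * ln (real N))"
    by (rule mult_left_mono[OF harm_pred_le_two_ln[OF assms]]) simp
  also have "\<dots> = 4 * real N * ln (real N) / pi"
    by simp
  also have "\<dots> \<le> 6 * (real N - 1) * ln (real N) / pi"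
    using assms by (intro divide_right_mono mult_right_mono) auto
  finally show ?thesis
    by (simp add: mult.commute)
qed

theorem lemma4:
  fixes N :: nat
  assumes "prime N" and "N \<ge> 3"
  shows "(1 / (real N - 1)) * (\<Sum>w=1..N-1. (1 / real N) *
            (\<Sum>h=1..N-1. \<bar>cot (pi * real h * real w / real N)\<bar> / real h))
         \<le> (harm (N - 1) / real N) * (6 / pi) * ln (real N)"
proof -
  define C where "C = (\<Sum>k=1..N-1. \<bar>cot (pi * real k / real N)\<bar>)"
  define H :: real where "H = harm (N - 1)"
  have "(\<Sum>w=1..N-1. (1 / real N) *
            (\<Sum>h=1..N-1. \<bar>cot (pi * real h * real w / real N)\<bar> / real h))
      = (1 / real N) * (C * H)"
    unfolding C_def H_def double_sum_abs_cot_eq[OF assms(1), symmetric]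
    by (rule sum_distrib_left[symmetric])
  then have "(1 / (real N - 1)) * (\<Sum>w=1..N-1. (1 / real N) *
            (\<Sum>h=1..N-1. \<bar>cot (pi * real h * real w / real N)\<bar> / real h))
      = C * H / (real N * (real N - 1))"
    by simp
  also have "\<dots> \<le> (real N - 1) * (6 / pi) * ln (real N) * H / (real N * (real N - 1))"
    using sum_abs_cot_le_ln[OF assms(2)] harm_nonneg[of "N - 1"] assms(2)
    unfolding C_def H_def by (intro divide_right_mono mult_right_mono) auto
  also have "\<dots> = (H / real N) * (6 / pi) * ln (real N)"
    using assms(2) by (simp add: field_simps)
  finally show ?thesis
    unfolding H_def .
qed

end
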